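(* Let $n\ge 2$ and let $\sigma$ be a uniformly random permutation of $E(G_n)$. Then the probability that $B(G_n,\sigma)$ is not odd is in $\mathcal{O}\left(\frac{\log^{2}n}{n}\right)$ as $n\to\infty$.
   Context: $G_n$ is the graph with vertex set $\{1,\dots,2n\}$ and edge set $\{\{i,i+1\}: 1\le i\le 2n-1\}\cup\{\{2n,1\}\}\cup\{\{i,i+n\}: 1\le i\le n\}$; it is $3$-regular. For a permutation $\sigma$ of $E(G_n)$, $B(G_n,\sigma)$ is the bipartite graph with parts $V_B=V(G_n)\times\{0,1\}$ and $W_B=E(G_n)$ and edge set $\{\{(v,0),e\}: v\in e\}\cup\{\{(v,1),e\}: v\in\sigma(e)\}$. A bipartite graph with parts $V,W$ in which every vertex of $V$ has degree $3$ is called odd if for every nonempty $X\subseteq W$ there is some $v\in V$ with $|X\cap N(v)|$ odd. *)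

theory Defs
  imports "HOL-Probability.Probability" "HOL-Combinatorics.Permutations"
    "HOL-Library.Landau_Symbols"
begin

definition Gn_verts :: "nat \<Rightarrow> nat set" where
  "Gn_verts n = {1..2*n}"

definition Gn_edges :: "nat \<Rightarrow> nat set set" where
  "Gn_edges n = {{i, i+1} | i. 1 \<le> i \<and> i \<le> 2*n - 1}
              \<union> {{2*n, 1}}
              \<union> {{i, i+n} | i. 1 \<le> i \<and> i \<le> n}"

definition B_left :: "nat \<Rightarrow> (nat \<times> nat) set" where
  "B_left n = Gn_verts n \<times> {0, 1}"

definition B_right :: "nat \<Rightarrow> nat set set" where
  "B_right n = Gn_edges n"

definition B_edges :: "nat \<Rightarrow> (nat set \<Rightarrow> nat set) \<Rightarrow> ((nat \<times> nat) \<times> nat set) set" where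
  "B_edges n \<sigma> = {((v,0), e) | v e. e \<in> Gn_edges n \<and> v \<in> e}
                 \<union> {((v,1), e) | v e. e \<in> Gn_edges n \<and> v \<in> Gn_verts n \<and> v \<in> \<sigma> e}"

definition nbhd :: "('a \<times> 'b) set \<Rightarrow> 'a \<Rightarrow> 'b set" where
  "nbhd Eb v = {w. (v, w) \<in> Eb}"

definition odd_bip :: "'a set \<Rightarrow> 'b set \<Rightarrow> ('a \<times> 'b) set \<Rightarrow> bool" where
  "odd_bip V W Eb \<longleftrightarrow>
     (\<forall>X. X \<subseteq> W \<and> X \<noteq> {} \<longrightarrow> (\<exists>v\<in>V. odd (card (X \<inter> nbhd Eb v))))"

definition not_odd_prob :: "nat \<Rightarrow> real" where
  "not_odd_prob n =
     measure_pmf.prob (pmf_of_set {\<sigma>. \<sigma> permutes Gn_edges n})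
       {\<sigma>. \<not> odd_bip (B_left n) (B_right n) (B_edges n \<sigma>)}"

end

theory Submission
  imports Defs "HOL-Real_Asymp.Real_Asymp"
begin

(* If B(G_n, sigma) is not odd, some nonempty edge set X meets every vertex of G_n evenly and so does
   sigma X: both X and sigma X lie in the cycle space of G_n. Hence the probability is at most
   sum_k c_k^2 / C(3n, k), where c_k counts the nonempty even edge sets of size k.
   Writing an edge set as a set A of cycle edges and a set B of chords, B determines A up to
   complementation and |B| <= |A|, so c_k <= 2 sum_{r <= k/2} C(n, r). For k < n the set A is moreover
   invariant under the half-turn u -> u + n, every maximal run of A below n begins and ends at a chord,
   and so A is encoded by at most (k + 2)/4 runs: c_k <= sum_{a <= (k+2)/4} C(nk, a).
   Against C(3n, k) the terms k = 3, 4 are O(1/n), those with 5 <= k < K = O(log n) are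
   O(log^12 n / n^(3/2)), those with K <= k < n decay like (2/3)^k <= 1/n, and those with
   n <= k <= 2n are exponentially small; c_k = 0 for k > 2n. *)

section \<open>Random permutations and families of sets\<close>

lemma permutes_exists_image_eq:
  assumes "finite E" "Y \<subseteq> E" "Y' \<subseteq> E" "card Y = card Y'"
  shows "\<exists>\<tau>. \<tau> permutes E \<and> \<tau> ` Y = Y'"
proof -
  have fin: "finite Y" "finite Y'" using assms finite_subset by auto
  obtain f where f: "bij_betw f Y Y'" using finite_same_card_bij[OF fin] assms(4) by blast
  have "card (E - Y) = card (E - Y')" using assms fin by (simp add: card_Diff_subset)
  then obtain g where g: "bij_betw g (E - Y) (E - Y')"
    using finite_same_card_bij[of "E - Y" "E - Y'"] assms(1) by auto
  define \<tau> where "\<tau> = (\<lambda>x. if x \<in> Y then f x else if x \<in> E then g x else x)"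
  have Y: "bij_betw \<tau> Y Y'" using f unfolding \<tau>_def by (rule bij_betw_cong[THEN iffD1, rotated]) auto
  have "bij_betw \<tau> (E - Y) (E - Y')"
    using g unfolding \<tau>_def by (rule bij_betw_cong[THEN iffD1, rotated]) auto
  then have "bij_betw \<tau> (Y \<union> (E - Y)) (Y' \<union> (E - Y'))" by (rule bij_betw_combine[OF Y]) auto
  moreover have "Y \<union> (E - Y) = E" "Y' \<union> (E - Y') = E" using assms by auto
  ultimately have "bij_betw \<tau> E E" by simp
  moreover have "{x. \<tau> x \<noteq> x} \<subseteq> E" unfolding \<tau>_def using assms by auto
  ultimately have "\<tau> permutes E" by (simp add: permutes_altdef)
  moreover have "\<tau> ` Y = Y'" using Y by (simp add: bij_betw_def)
  ultimately show ?thesis by blast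
qed

lemma card_permutes_image_eq_cong:
  assumes "finite E" "Y \<subseteq> E" "Y' \<subseteq> E" "card Y = card Y'"
  shows "card {\<sigma>. \<sigma> permutes E \<and> \<sigma> ` X = Y} = card {\<sigma>. \<sigma> permutes E \<and> \<sigma> ` X = Y'}"
proof -
  obtain \<tau> where \<tau>: "\<tau> permutes E" "\<tau> ` Y = Y'" using permutes_exists_image_eq[OF assms] by blast
  have "bij_betw ((\<circ>) \<tau>) {\<sigma>. \<sigma> permutes E \<and> \<sigma> ` X = Y} {\<sigma>. \<sigma> permutes E \<and> \<sigma> ` X = Y'}"
  proof (rule bij_betwI[where g="(\<circ>) (inv \<tau>)"])
    show "(\<circ>) \<tau> \<in> {\<sigma>. \<sigma> permutes E \<and> \<sigma> ` X = Y} \<rightarrow> {\<sigma>. \<sigma> permutes E \<and> \<sigma> ` X = Y'}"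
      using \<tau> by (auto simp: permutes_compose image_comp[symmetric])
    have "inv \<tau> ` Y' = Y"
      unfolding \<tau>(2)[symmetric] using permutes_inj[OF \<tau>(1)] by (simp add: image_inv_f_f)
    then show "(\<circ>) (inv \<tau>) \<in> {\<sigma>. \<sigma> permutes E \<and> \<sigma> ` X = Y'} \<rightarrow> {\<sigma>. \<sigma> permutes E \<and> \<sigma> ` X = Y}"
      using \<tau> by (auto simp: permutes_compose permutes_inv image_comp[symmetric])
  qed (simp_all add: o_assoc permutes_inv_o[OF \<tau>(1)])
  then show ?thesis by (rule bij_betw_same_card)
qed

lemma card_permutes_image_eq:
  assumes "finite E" "X \<subseteq> E" "Y \<subseteq> E" "card Y = card X"
  shows "card {\<sigma>. \<sigma> permutes E \<and> \<sigma> ` X = Y} * (card E choose card X) = fact (card E)"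
proof -
  define T where "T = {Z. Z \<subseteq> E \<and> card Z = card X}"
  have "\<sigma> ` X \<in> T" if \<sigma>: "\<sigma> permutes E" for \<sigma>
  proof -
    have "\<sigma> ` X \<subseteq> E" using image_mono[OF assms(2), of \<sigma>] permutes_image[OF \<sigma>] by simp
    moreover have "card (\<sigma> ` X) = card X" using card_image[OF permutes_inj_on[OF \<sigma>]] .
    ultimately show ?thesis unfolding T_def by simp
  qed
  then have "{\<sigma>. \<sigma> permutes E} = (\<Union>Z\<in>T. {\<sigma>. \<sigma> permutes E \<and> \<sigma> ` X = Z})" by auto
  then have "fact (card E) = card (\<Union>Z\<in>T. {\<sigma>. \<sigma> permutes E \<and> \<sigma> ` X = Z})"
    using card_permutations[OF refl assms(1)] by simp
  also have "\<dots> = (\<Sum>Z\<in>T. card {\<sigma>. \<sigma> permutes E \<and> \<sigma> ` X = Z})"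
    using finite_permutations[OF assms(1)] assms(1) unfolding T_def
    by (intro card_UN_disjoint) (auto intro: finite_subset[of _ "{\<sigma>. \<sigma> permutes E}"])
  also have "\<dots> = (\<Sum>Z\<in>T. card {\<sigma>. \<sigma> permutes E \<and> \<sigma> ` X = Y})"
    by (rule sum.cong) (use assms in \<open>auto simp: T_def intro!: card_permutes_image_eq_cong\<close>)
  also have "\<dots> = card T * card {\<sigma>. \<sigma> permutes E \<and> \<sigma> ` X = Y}" by simp
  also have "card T = card E choose card X" unfolding T_def using n_subsets[OF assms(1)] by simp
  finally show ?thesis by (simp add: mult.commute)
qed

lemma card_permutes_image_in:
  assumes "finite E" "X \<subseteq> E" "\<And>Y. Y \<in> T \<Longrightarrow> Y \<subseteq> E"
  shows "real (card {\<sigma>. \<sigma> permutes E \<and> \<sigma> ` X \<in> T})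
           = real (card {Y\<in>T. card Y = card X}) * fact (card E) / real (card E choose card X)"
proof -
  define U where "U = {Y\<in>T. card Y = card X}"
  have "U \<subseteq> Pow E" using assms(3) unfolding U_def by blast
  then have "finite U" using assms(1) by (simp add: finite_subset)
  have eq: "{\<sigma>. \<sigma> permutes E \<and> \<sigma> ` X \<in> T} = (\<Union>Y\<in>U. {\<sigma>. \<sigma> permutes E \<and> \<sigma> ` X = Y})"
    unfolding U_def by (auto simp: card_image permutes_inj_on)
  have "card {\<sigma>. \<sigma> permutes E \<and> \<sigma> ` X \<in> T} = (\<Sum>Y\<in>U. card {\<sigma>. \<sigma> permutes E \<and> \<sigma> ` X = Y})"
    unfolding eq by (rule card_UN_disjoint[OF \<open>finite U\<close>])
      (use finite_permutations[OF assms(1)] in \<open>auto intro: finite_subset[of _ "{\<sigma>. \<sigma> permutes E}"]\<close>)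
  then have "card {\<sigma>. \<sigma> permutes E \<and> \<sigma> ` X \<in> T} * (card E choose card X) = card U * fact (card E)"
    using assms by (simp add: sum_distrib_right U_def card_permutes_image_eq)
  then have "real (card {\<sigma>. \<sigma> permutes E \<and> \<sigma> ` X \<in> T} * (card E choose card X))
               = real (card U * fact (card E))" by (simp only:)
  then have "real (card {\<sigma>. \<sigma> permutes E \<and> \<sigma> ` X \<in> T}) * real (card E choose card X)
               = real (card U) * fact (card E)"
    unfolding of_nat_mult of_nat_fact .
  moreover have "0 < card E choose card X" using card_mono[OF assms(1,2)] by simp
  ultimately show ?thesis unfolding U_def by (simp add: field_simps)
qed

lemma sum_by_card:
  fixes g :: "nat \<Rightarrow> 'a::comm_semiring_1"
  assumes "finite E" "\<And>X. X \<in> T \<Longrightarrow> X \<subseteq> E"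
  shows "(\<Sum>X\<in>T. g (card X)) = (\<Sum>k\<le>card E. of_nat (card {Y\<in>T. card Y = k}) * g k)"
proof -
  have "T \<subseteq> Pow E" using assms(2) by blast
  then have "finite T" using assms(1) by (simp add: finite_subset)
  moreover have "card ` T \<subseteq> {..card E}" using card_mono[OF assms(1) assms(2)] by auto
  ultimately have "(\<Sum>X\<in>T. g (card X)) = (\<Sum>k\<le>card E. \<Sum>X\<in>{Y\<in>T. card Y = k}. g (card X))"
    by (intro sum.group[symmetric]) auto
  also have "\<dots> = (\<Sum>k\<le>card E. of_nat (card {Y\<in>T. card Y = k}) * g k)"
    by (intro sum.cong refl) (simp cong: sum.cong_simp)
  finally show ?thesis .
qed

lemma prob_permutes_maps_family_into_itself_le:
  assumes "finite E" "\<And>X. X \<in> T \<Longrightarrow> X \<subseteq> E"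
  shows "measure_pmf.prob (pmf_of_set {\<sigma>. \<sigma> permutes E}) {\<sigma>. \<exists>X\<in>T. \<sigma> ` X \<in> T}
           \<le> (\<Sum>k\<le>card E. real (card {Y\<in>T. card Y = k})^2 / real (card E choose k))"
proof -
  define P where "P = {\<sigma>. \<sigma> permutes E}"
  define c where "c k = real (card {Y\<in>T. card Y = k})" for k
  have "T \<subseteq> Pow E" using assms(2) by blast
  then have "finite T" using assms(1) by (simp add: finite_subset)
  have "finite P" "card P = fact (card E)"
    unfolding P_def using finite_permutations card_permutations assms(1) by auto
  have "P \<noteq> {}" unfolding P_def using permutes_id by blast
  have "P \<inter> {\<sigma>. \<exists>X\<in>T. \<sigma> ` X \<in> T} = (\<Union>X\<in>T. {\<sigma>. \<sigma> permutes E \<and> \<sigma> ` X \<in> T})"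
    unfolding P_def by blast
  then have "card (P \<inter> {\<sigma>. \<exists>X\<in>T. \<sigma> ` X \<in> T}) \<le> (\<Sum>X\<in>T. card {\<sigma>. \<sigma> permutes E \<and> \<sigma> ` X \<in> T})"
    using card_UN_le[OF \<open>finite T\<close>] by simp
  then have "real (card (P \<inter> {\<sigma>. \<exists>X\<in>T. \<sigma> ` X \<in> T}))
               \<le> real (\<Sum>X\<in>T. card {\<sigma>. \<sigma> permutes E \<and> \<sigma> ` X \<in> T})"
    by (simp only: of_nat_le_iff)
  also have "\<dots> = (\<Sum>X\<in>T. c (card X) * fact (card E) / real (card E choose card X))"
    unfolding of_nat_sum c_def using assms by (intro sum.cong refl card_permutes_image_in) auto
  finally have "real (card (P \<inter> {\<sigma>. \<exists>X\<in>T. \<sigma> ` X \<in> T})) / fact (card E)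
               \<le> (\<Sum>X\<in>T. c (card X) * fact (card E) / real (card E choose card X)) / fact (card E)"
    by (rule divide_right_mono) simp
  also have "\<dots> = (\<Sum>X\<in>T. c (card X) / real (card E choose card X))"
    by (simp add: sum_divide_distrib)
  also have "\<dots> = (\<Sum>k\<le>card E. c k * (c k / real (card E choose k)))"
    unfolding c_def by (rule sum_by_card[OF assms])
  finally show ?thesis
    using measure_pmf_of_set[OF \<open>P \<noteq> {}\<close> \<open>finite P\<close>] \<open>card P = fact (card E)\<close>
    by (auto simp: P_def c_def power2_eq_square)
qed

section \<open>The graph \<open>G\<^sub>n\<close> in cycle/chord coordinates\<close>

text \<open>Vertices are addressed by indices \<open>u < 2 * n\<close> standing for the vertex \<open>u + 1\<close>;
  \<open>cycle_edge n u\<close> joins \<open>u + 1\<close> to its successor on the \<open>2n\<close>-cycle.\<close>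

definition cycle_edge :: "nat \<Rightarrow> nat \<Rightarrow> nat set" where
  "cycle_edge n j = {j + 1, if j + 1 = 2 * n then 1 else j + 2}"

definition chord :: "nat \<Rightarrow> nat \<Rightarrow> nat set" where
  "chord n j = {j + 1, j + 1 + n}"

definition cyc_pred :: "nat \<Rightarrow> nat \<Rightarrow> nat" where
  "cyc_pred n u = (if u = 0 then 2 * n - 1 else u - 1)"

lemma Gn_edges_eq:
  assumes "n \<ge> 2"
  shows "Gn_edges n = cycle_edge n ` {..<2*n} \<union> chord n ` {..<n}"
proof -
  have "{{i, i+1} | i. 1 \<le> i \<and> i \<le> 2*n - 1} \<union> {{2*n, 1}} = cycle_edge n ` {..<2*n}"
  proof (intro equalityI subsetI)
    fix e assume "e \<in> {{i, i+1} | i. 1 \<le> i \<and> i \<le> 2*n - 1} \<union> {{2*n, 1}}"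
    then consider i where "e = {i, i+1}" "1 \<le> i" "i \<le> 2*n - 1" | "e = {2*n, 1}" by blast
    then show "e \<in> cycle_edge n ` {..<2*n}"
    proof cases
      case 1
      then have "e = cycle_edge n (i - 1)" "i - 1 < 2*n" using assms by (auto simp: cycle_edge_def)
      then show ?thesis by blast
    next
      case 2
      then have "e = cycle_edge n (2*n - 1)" "2*n - 1 < 2*n" using assms by (auto simp: cycle_edge_def)
      then show ?thesis by blast
    qed
  next
    fix e assume "e \<in> cycle_edge n ` {..<2*n}"
    then obtain j where "j < 2*n" "e = cycle_edge n j" by blast
    then show "e \<in> {{i, i+1} | i. 1 \<le> i \<and> i \<le> 2*n - 1} \<union> {{2*n, 1}}"
      by (cases "j + 1 = 2*n") (auto simp: cycle_edge_def intro!: exI[of _ "j + 1"])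
  qed
  moreover have "{{i, i+n} | i. 1 \<le> i \<and> i \<le> n} = chord n ` {..<n}"
  proof (intro equalityI subsetI)
    fix e assume "e \<in> {{i, i+n} | i. 1 \<le> i \<and> i \<le> n}"
    then obtain i where "e = {i, i+n}" "1 \<le> i" "i \<le> n" by blast
    then have "e = chord n (i - 1)" "i - 1 < n" by (auto simp: chord_def)
    then show "e \<in> chord n ` {..<n}" by blast
  next
    fix e assume "e \<in> chord n ` {..<n}"
    then obtain j where "j < n" "e = chord n j" by blast
    then show "e \<in> {{i, i+n} | i. 1 \<le> i \<and> i \<le> n}" by (auto simp: chord_def intro!: exI[of _ "j + 1"])
  qed
  ultimately show ?thesis unfolding Gn_edges_def by simp
qed

lemma inj_on_cycle_edge: "n \<ge> 2 \<Longrightarrow> inj_on (cycle_edge n) {..<2*n}"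
  unfolding inj_on_def cycle_edge_def by (auto simp: doubleton_eq_iff split: if_splits)

lemma inj_on_chord: "inj_on (chord n) {..<n}"
  unfolding inj_on_def chord_def by (auto simp: doubleton_eq_iff)

lemma cycle_edge_neq_chord: "n \<ge> 2 \<Longrightarrow> j < 2*n \<Longrightarrow> j' < n \<Longrightarrow> cycle_edge n j \<noteq> chord n j'"
  unfolding cycle_edge_def chord_def by (auto simp: doubleton_eq_iff split: if_splits)

lemma finite_Gn_edges: "finite (Gn_edges n)"
proof -
  have "Gn_edges n \<subseteq> Pow {0..2*n+1}" unfolding Gn_edges_def by auto
  then show ?thesis by (rule finite_subset) simp
qed

lemma card_Gn_edges:
  assumes "n \<ge> 2"
  shows "card (Gn_edges n) = 3 * n"
proof -
  have "cycle_edge n ` {..<2*n} \<inter> chord n ` {..<n} = {}"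
    using cycle_edge_neq_chord[OF assms] by auto
  then have "card (Gn_edges n) = card (cycle_edge n ` {..<2*n}) + card (chord n ` {..<n})"
    unfolding Gn_edges_eq[OF assms] by (simp add: card_Un_disjoint)
  then show ?thesis using inj_on_cycle_edge[OF assms] inj_on_chord by (simp add: card_image)
qed

lemma cyc_pred_less: "n \<ge> 1 \<Longrightarrow> u < 2*n \<Longrightarrow> cyc_pred n u < 2*n"
  unfolding cyc_pred_def by auto

lemma cyc_pred_neq: "n \<ge> 1 \<Longrightarrow> cyc_pred n u \<noteq> u"
  unfolding cyc_pred_def by auto

lemma mem_cycle_edge_iff:
  "n \<ge> 2 \<Longrightarrow> j < 2*n \<Longrightarrow> u < 2*n \<Longrightarrow> u + 1 \<in> cycle_edge n j \<longleftrightarrow> j = u \<or> j = cyc_pred n u"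
  unfolding cycle_edge_def cyc_pred_def by (auto split: if_splits)

lemma mem_chord_iff: "j < n \<Longrightarrow> u < 2*n \<Longrightarrow> u + 1 \<in> chord n j \<longleftrightarrow> j = u mod n"
  unfolding chord_def by (cases "u < n") (auto simp: le_mod_geq)

lemma edges_at_vertex:
  assumes "n \<ge> 2" "u < 2*n"
  shows "{e \<in> Gn_edges n. u + 1 \<in> e} = {cycle_edge n u, cycle_edge n (cyc_pred n u), chord n (u mod n)}"
proof -
  have "cyc_pred n u < 2*n" "u mod n < n" using assms cyc_pred_less[of n u] by auto
  then have "{cycle_edge n u, cycle_edge n (cyc_pred n u), chord n (u mod n)} \<subseteq> Gn_edges n"
    using assms by (auto simp: Gn_edges_eq)
  moreover have "e \<in> {cycle_edge n u, cycle_edge n (cyc_pred n u), chord n (u mod n)} \<longleftrightarrow> u + 1 \<in> e"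
    if "e \<in> Gn_edges n" for e
  proof -
    from that consider j where "j < 2*n" "e = cycle_edge n j" | j where "j < n" "e = chord n j"
      unfolding Gn_edges_eq[OF assms(1)] by blast
    then show ?thesis
    proof cases
      case 1
      then show ?thesis
        using cycle_edge_neq_chord[OF assms(1) 1(1) \<open>u mod n < n\<close>] assms \<open>cyc_pred n u < 2*n\<close>
          mem_cycle_edge_iff[OF assms(1) 1(1) assms(2)]
        by (auto simp: inj_on_eq_iff[OF inj_on_cycle_edge[OF assms(1)]])
    next
      case 2
      then show ?thesis
        using cycle_edge_neq_chord[OF assms(1) _ 2(1)] assms \<open>cyc_pred n u < 2*n\<close> \<open>u mod n < n\<close>
          mem_chord_iff[OF 2(1) assms(2)]
        by (auto simp: inj_on_eq_iff[OF inj_on_chord])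
    qed
  qed
  ultimately show ?thesis by blast
qed

lemma card_edges_at_vertex:
  assumes "n \<ge> 2" "X \<subseteq> Gn_edges n" "u < 2*n"
  shows "card {e\<in>X. u + 1 \<in> e}
           = of_bool (cycle_edge n u \<in> X) + of_bool (cycle_edge n (cyc_pred n u) \<in> X)
             + of_bool (chord n (u mod n) \<in> X)"
proof -
  have "{e\<in>X. u + 1 \<in> e} = X \<inter> {cycle_edge n u, cycle_edge n (cyc_pred n u), chord n (u mod n)}"
    using edges_at_vertex[OF assms(1,3)] assms(2) by blast
  moreover have "cycle_edge n u \<noteq> cycle_edge n (cyc_pred n u)"
    using inj_on_cycle_edge[OF assms(1)] assms cyc_pred_less[of n u] cyc_pred_neq[of n u]
    by (auto simp: inj_on_def)
  moreover have "cycle_edge n u \<noteq> chord n (u mod n)" "cycle_edge n (cyc_pred n u) \<noteq> chord n (u mod n)"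
    using cycle_edge_neq_chord assms cyc_pred_less[of n u] by auto
  ultimately show ?thesis by (simp add: card_insert_if)
qed

definition cycle_part :: "nat \<Rightarrow> nat set set \<Rightarrow> nat set" where
  "cycle_part n X = {j. j < 2*n \<and> cycle_edge n j \<in> X}"

definition chord_part :: "nat \<Rightarrow> nat set set \<Rightarrow> nat set" where
  "chord_part n X = {j. j < n \<and> chord n j \<in> X}"

definition even_edge_set :: "nat \<Rightarrow> nat set set \<Rightarrow> bool" where
  "even_edge_set n X \<longleftrightarrow> (\<forall>v\<in>Gn_verts n. even (card {e\<in>X. v \<in> e}))"

text \<open>\<open>A\<close> and \<open>B\<close> play the roles of \<open>cycle_part n X\<close> and \<open>chord_part n X\<close>: the summands count the
  edges of \<open>X\<close> at the vertex \<open>u + 1\<close>.\<close>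

definition even_parts :: "nat \<Rightarrow> nat set \<Rightarrow> nat set \<Rightarrow> bool" where
  "even_parts n A B \<longleftrightarrow>
     (\<forall>u<2*n. even (of_bool (u \<in> A) + of_bool (cyc_pred n u \<in> A) + of_bool (u mod n \<in> B) :: nat))"

lemma edge_set_eq_parts:
  assumes "n \<ge> 2" "X \<subseteq> Gn_edges n"
  shows "X = cycle_edge n ` cycle_part n X \<union> chord n ` chord_part n X"
  using assms unfolding Gn_edges_eq[OF assms(1)] cycle_part_def chord_part_def by auto

lemma card_edge_set_eq_parts:
  assumes "n \<ge> 2" "X \<subseteq> Gn_edges n"
  shows "card X = card (cycle_part n X) + card (chord_part n X)"
proof -
  have "cycle_edge n ` cycle_part n X \<inter> chord n ` chord_part n X = {}"
    using cycle_edge_neq_chord[OF assms(1)] unfolding cycle_part_def chord_part_def by auto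
  moreover have "inj_on (cycle_edge n) (cycle_part n X)"
    by (rule inj_on_subset[OF inj_on_cycle_edge[OF assms(1)]]) (auto simp: cycle_part_def)
  moreover have "inj_on (chord n) (chord_part n X)"
    by (rule inj_on_subset[OF inj_on_chord]) (auto simp: chord_part_def)
  ultimately show ?thesis
    by (subst edge_set_eq_parts[OF assms])
       (simp add: card_Un_disjoint card_image cycle_part_def chord_part_def)
qed

lemma even_edge_set_iff_even_parts:
  assumes "n \<ge> 2" "X \<subseteq> Gn_edges n"
  shows "even_edge_set n X \<longleftrightarrow> even_parts n (cycle_part n X) (chord_part n X)"
proof -
  have "even_edge_set n X \<longleftrightarrow> (\<forall>u<2*n. even (card {e\<in>X. u + 1 \<in> e}))"
    unfolding even_edge_set_def Gn_verts_def image_Suc_lessThan[symmetric] by auto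
  also have "\<dots> \<longleftrightarrow> even_parts n (cycle_part n X) (chord_part n X)"
    unfolding even_parts_def
  proof (intro iff_allI imp_cong refl)
    fix u assume "u < 2*n"
    then show "even (card {e\<in>X. u + 1 \<in> e}) \<longleftrightarrow>
      even (of_bool (u \<in> cycle_part n X) + of_bool (cyc_pred n u \<in> cycle_part n X)
            + of_bool (u mod n \<in> chord_part n X) :: nat)"
      using card_edges_at_vertex[OF assms] cyc_pred_less[of n u] assms(1)
      by (simp add: cycle_part_def chord_part_def)
  qed
  finally show ?thesis .
qed

section \<open>Reduction to counting even edge sets\<close>

definition even_edge_sets :: "nat \<Rightarrow> nat set set set" where
  "even_edge_sets n = {X. X \<subseteq> Gn_edges n \<and> X \<noteq> {} \<and> even_edge_set n X}"

lemma nbhd_B_edges_0: "nbhd (B_edges n \<sigma>) (v, 0) = {e \<in> Gn_edges n. v \<in> e}"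
  unfolding nbhd_def B_edges_def by auto

lemma nbhd_B_edges_1: "v \<in> Gn_verts n \<Longrightarrow> nbhd (B_edges n \<sigma>) (v, 1) = {e \<in> Gn_edges n. v \<in> \<sigma> e}"
  unfolding nbhd_def B_edges_def by auto

lemma not_odd_imp_even_edge_set_and_image:
  assumes "\<sigma> permutes Gn_edges n" "\<not> odd_bip (B_left n) (B_right n) (B_edges n \<sigma>)"
  shows "\<exists>X\<in>even_edge_sets n. \<sigma> ` X \<in> even_edge_sets n"
proof -
  obtain X where X: "X \<subseteq> Gn_edges n" "X \<noteq> {}"
    and ev: "\<forall>v\<in>B_left n. even (card (X \<inter> nbhd (B_edges n \<sigma>) v))"
    using assms(2) unfolding odd_bip_def B_right_def by auto
  have "even_edge_set n X" unfolding even_edge_set_def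
  proof
    fix v assume "v \<in> Gn_verts n"
    then have "even (card (X \<inter> nbhd (B_edges n \<sigma>) (v, 0)))" using ev by (simp add: B_left_def)
    moreover have "X \<inter> nbhd (B_edges n \<sigma>) (v, 0) = {e\<in>X. v \<in> e}" using X(1) by (auto simp: nbhd_B_edges_0)
    ultimately show "even (card {e\<in>X. v \<in> e})" by simp
  qed
  moreover have "even_edge_set n (\<sigma> ` X)" unfolding even_edge_set_def
  proof
    fix v assume v: "v \<in> Gn_verts n"
    then have "even (card (X \<inter> nbhd (B_edges n \<sigma>) (v, 1)))" using ev by (simp add: B_left_def)
    moreover have "X \<inter> nbhd (B_edges n \<sigma>) (v, 1) = {e\<in>X. v \<in> \<sigma> e}"
      using X(1) unfolding nbhd_B_edges_1[OF v] by auto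
    moreover have "{e\<in>\<sigma> ` X. v \<in> e} = \<sigma> ` {e\<in>X. v \<in> \<sigma> e}" by auto
    ultimately show "even (card {e\<in>\<sigma> ` X. v \<in> e})"
      by (simp add: card_image permutes_inj_on[OF assms(1)])
  qed
  moreover have "\<sigma> ` X \<subseteq> Gn_edges n" using permutes_image[OF assms(1)] X(1) by blast
  ultimately show ?thesis using X unfolding even_edge_sets_def by auto
qed

lemma not_odd_prob_le_sum_even_edge_sets:
  assumes "n \<ge> 2"
  shows "not_odd_prob n
           \<le> (\<Sum>k\<le>3*n. real (card {Y\<in>even_edge_sets n. card Y = k})^2 / real ((3*n) choose k))"
proof -
  have perms: "{\<sigma>. \<sigma> permutes Gn_edges n} \<noteq> {}" "finite {\<sigma>. \<sigma> permutes Gn_edges n}"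
    using permutes_id[of "Gn_edges n"] finite_permutations[OF finite_Gn_edges] by blast+
  have "not_odd_prob n \<le> measure_pmf.prob (pmf_of_set {\<sigma>. \<sigma> permutes Gn_edges n})
                            {\<sigma>. \<exists>X\<in>even_edge_sets n. \<sigma> ` X \<in> even_edge_sets n}"
    unfolding not_odd_prob_def
    by (intro measure_pmf.finite_measure_mono_AE)
       (auto simp: AE_measure_pmf_iff set_pmf_of_set[OF perms] intro: not_odd_imp_even_edge_set_and_image)
  also have "\<dots> \<le> (\<Sum>k\<le>3*n. real (card {Y\<in>even_edge_sets n. card Y = k})^2 / real ((3*n) choose k))"
    using prob_permutes_maps_family_into_itself_le[OF finite_Gn_edges, of "even_edge_sets n" n]
    by (simp add: even_edge_sets_def card_Gn_edges[OF assms])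
  finally show ?thesis .
qed

definition even_pairs :: "nat \<Rightarrow> nat \<Rightarrow> (nat set \<times> nat set) set" where
  "even_pairs n k = {(A, B). A \<subseteq> {..<2*n} \<and> B \<subseteq> {..<n} \<and> even_parts n A B
                             \<and> card A + card B = k \<and> (A \<noteq> {} \<or> B \<noteq> {})}"

lemma finite_even_pairs: "finite (even_pairs n k)"
proof -
  have "even_pairs n k \<subseteq> Pow {..<2*n} \<times> Pow {..<n}" unfolding even_pairs_def by auto
  then show ?thesis by (rule finite_subset) simp
qed

lemma card_even_edge_sets_le:
  assumes "n \<ge> 2"
  shows "card {Y\<in>even_edge_sets n. card Y = k} \<le> card (even_pairs n k)"
proof (rule card_inj_on_le[OF _ _ finite_even_pairs])
  show "inj_on (\<lambda>X. (cycle_part n X, chord_part n X)) {Y\<in>even_edge_sets n. card Y = k}"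
    using edge_set_eq_parts[OF assms] unfolding inj_on_def even_edge_sets_def by (metis (no_types, lifting) mem_Collect_eq prod.inject)
  show "(\<lambda>X. (cycle_part n X, chord_part n X)) ` {Y\<in>even_edge_sets n. card Y = k} \<subseteq> even_pairs n k"
  proof clarify
    fix X assume "X \<in> even_edge_sets n" "k = card X"
    then have X: "X \<subseteq> Gn_edges n" "X \<noteq> {}" "even_edge_set n X" unfolding even_edge_sets_def by auto
    then have "cycle_part n X \<noteq> {} \<or> chord_part n X \<noteq> {}" using edge_set_eq_parts[OF assms X(1)] by auto
    then show "(cycle_part n X, chord_part n X) \<in> even_pairs n (card X)"
      using X even_edge_set_iff_even_parts[OF assms X(1)] card_edge_set_eq_parts[OF assms X(1)]
      unfolding even_pairs_def cycle_part_def chord_part_def by auto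
  qed
qed

lemma sum_cyc_pred:
  fixes f :: "nat \<Rightarrow> 'a::comm_monoid_add"
  assumes "n \<ge> 1"
  shows "(\<Sum>u<2*n. f (cyc_pred n u)) = (\<Sum>u<2*n. f u)"
proof -
  have inj: "inj_on (cyc_pred n) {..<2*n}" unfolding inj_on_def cyc_pred_def by auto
  then have "cyc_pred n ` {..<2*n} = {..<2*n}"
    using assms by (intro endo_inj_surj) (auto simp: cyc_pred_less)
  then show ?thesis using sum.reindex[OF inj, of f] by simp
qed

lemma sum_mod_double:
  fixes f :: "nat \<Rightarrow> 'a::comm_semiring_1"
  shows "(\<Sum>u<2*n. f (u mod n)) = 2 * (\<Sum>u<n. f u)"
proof -
  have "{..<2*n} = {..<n} \<union> {n..<2*n}" by auto
  then have "(\<Sum>u<2*n. f (u mod n)) = (\<Sum>u\<in>{..<n} \<union> {n..<2*n}. f (u mod n))" by simp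
  also have "\<dots> = (\<Sum>u<n. f (u mod n)) + (\<Sum>u\<in>{n..<2*n}. f (u mod n))"
    by (rule sum.union_disjoint) auto
  also have "(\<Sum>u\<in>{n..<2*n}. f (u mod n)) = (\<Sum>u\<in>{0..<n}. f ((u + n) mod n))"
    using sum.shift_bounds_nat_ivl[of "\<lambda>u. f (u mod n)" 0 n n] by (simp add: mult_2)
  finally show ?thesis by (simp add: mult_2 lessThan_atLeast0)
qed

lemma sum_of_bool_mem:
  fixes N :: nat
  assumes "A \<subseteq> {..<N}"
  shows "(\<Sum>u<N. of_bool (u \<in> A) :: nat) = card A"
proof -
  have "(\<Sum>u<N. of_bool (u \<in> A) :: nat) = card ({..<N} \<inter> {x. x \<in> A})"
    by (subst sum_of_bool_eq) simp_all
  also have "{..<N} \<inter> {u. u \<in> A} = A" using assms by auto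
  finally show ?thesis .
qed

lemma even_parts_card_le:
  assumes "n \<ge> 1" "even_parts n A B" "A \<subseteq> {..<2*n}" "B \<subseteq> {..<n}"
  shows "card B \<le> card A" "card A + card B \<le> 2 * n"
proof -
  define a where "a u = (of_bool (u \<in> A) + of_bool (cyc_pred n u \<in> A) :: nat)" for u
  define b where "b u = (of_bool (u mod n \<in> B) :: nat)" for u
  have ab: "b u \<le> a u \<and> a u + b u \<le> 2" if "u < 2*n" for u
  proof -
    have "even (a u + b u)" using assms(2) that unfolding even_parts_def a_def b_def by auto
    moreover have "b u \<le> 1" "a u \<le> 2" unfolding a_def b_def by auto
    ultimately show ?thesis by presburger
  qed
  have "(\<Sum>u<2*n. a u) = 2 * card A"
    unfolding a_def sum.distrib sum_cyc_pred[OF assms(1), of "\<lambda>u. of_bool (u \<in> A)"]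
      sum_of_bool_mem[OF assms(3)] by simp
  moreover have "(\<Sum>u<2*n. b u) = 2 * card B"
    unfolding b_def sum_mod_double[of "\<lambda>u. of_bool (u \<in> B) :: nat"] sum_of_bool_mem[OF assms(4)] ..
  moreover have "(\<Sum>u<2*n. b u) \<le> (\<Sum>u<2*n. a u)" by (rule sum_mono) (use ab in auto)
  moreover have "(\<Sum>u<2*n. a u + b u) \<le> (\<Sum>u<2*n. 2)" by (rule sum_mono) (use ab in auto)
  ultimately show "card B \<le> card A" "card A + card B \<le> 2 * n" by (simp_all add: sum.distrib)
qed

lemma eq_cyc_pred_imp_const:
  assumes "\<And>u. u < 2*n \<Longrightarrow> d u = d (cyc_pred n u)"
  shows "u < 2*n \<Longrightarrow> d u = d 0"
proof (induction u)
  case (Suc u)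
  then show ?case using assms[OF Suc.prems] by (simp add: cyc_pred_def)
qed simp

lemma even_parts_cycle_part_unique:
  assumes "n \<ge> 1" "even_parts n A B" "even_parts n A' B" "A \<subseteq> {..<2*n}" "A' \<subseteq> {..<2*n}"
  shows "A' = A \<or> A' = {..<2*n} - A"
proof -
  define d where "d u = (u \<in> A \<longleftrightarrow> u \<in> A')" for u
  have "d u = d (cyc_pred n u)" if "u < 2*n" for u
  proof -
    have "even (of_bool (u \<in> A) + of_bool (cyc_pred n u \<in> A) + of_bool (u mod n \<in> B) :: nat)"
      "even (of_bool (u \<in> A') + of_bool (cyc_pred n u \<in> A') + of_bool (u mod n \<in> B) :: nat)"
      using assms(2,3) that unfolding even_parts_def by blast+
    then show ?thesis unfolding d_def
      by (cases "u \<in> A"; cases "u \<in> A'"; cases "cyc_pred n u \<in> A"; cases "cyc_pred n u \<in> A'";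
          cases "u mod n \<in> B"; simp)
  qed
  then have "d u = d 0" if "u < 2*n" for u using eq_cyc_pred_imp_const that by blast
  then show ?thesis using assms(4,5) unfolding d_def by (cases "d 0") (auto simp: d_def)
qed

lemma cyc_pred_half_turn:
  assumes "n \<ge> 1" "u < 2*n"
  shows "cyc_pred n ((u + n) mod (2*n)) = (cyc_pred n u + n) mod (2*n)"
proof -
  have "(v + n) mod (2*n) = (if v < n then v + n else v - n)" if "v < 2*n" for v
    using that by (auto simp: mod_if)
  then show ?thesis using assms cyc_pred_less[OF assms] unfolding cyc_pred_def by auto
qed

lemma card_half_turn_complement:
  assumes "A \<subseteq> {..<2*n}" "\<And>u. u < n \<Longrightarrow> u \<in> A \<longleftrightarrow> u + n \<notin> A"
  shows "card A = n"
proof -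
  define A1 where "A1 = A \<inter> {..<n}"
  have A_eq: "A = A1 \<union> (\<lambda>u. u + n) ` ({..<n} - A1)"
  proof (intro equalityI subsetI)
    fix x assume "x \<in> A"
    show "x \<in> A1 \<union> (\<lambda>u. u + n) ` ({..<n} - A1)"
    proof (cases "x < n")
      case False
      have "x - n < n" using assms(1) \<open>x \<in> A\<close> by auto
      moreover have "x - n + n = x" using False by simp
      ultimately have "x - n \<in> {..<n} - A1"
        using assms(2)[of "x - n"] \<open>x \<in> A\<close> unfolding A1_def by simp
      then show ?thesis using \<open>x - n + n = x\<close> by (metis UnI2 image_eqI)
    qed (use \<open>x \<in> A\<close> A1_def in auto)
  qed (use assms in \<open>auto simp: A1_def\<close>)
  have "card A = card (A1 \<union> (\<lambda>u. u + n) ` ({..<n} - A1))" using A_eq by (rule arg_cong)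
  also have "\<dots> = card A1 + card ((\<lambda>u. u + n) ` ({..<n} - A1))"
    by (rule card_Un_disjoint) (auto simp: A1_def)
  also have "\<dots> = card A1 + card ({..<n} - A1)" by (simp add: card_image)
  also have "\<dots> = n"
    using card_mono[of "{..<n}" A1] by (auto simp: A1_def card_Diff_subset)
  finally show ?thesis .
qed

text \<open>\<open>A\<close> and its half-turn satisfy the same parity constraints, so along the cycle they either agree
  everywhere or disagree everywhere; the latter forces \<open>card A = n\<close>.\<close>

lemma even_parts_half_turn_invariant:
  assumes "n \<ge> 1" "even_parts n A B" "A \<subseteq> {..<2*n}" "card A < n" "u < n"
  shows "u \<in> A \<longleftrightarrow> u + n \<in> A"
proof -
  define h where "h u = (u + n) mod (2*n)" for u
  define d where "d u = (u \<in> A \<longleftrightarrow> h u \<in> A)" for u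
  have "d u = d (cyc_pred n u)" if u: "u < 2*n" for u
  proof -
    have "h u < 2*n" "h u mod n = u mod n" using assms(1) unfolding h_def by (auto simp: mod_mod_cancel)
    moreover have "cyc_pred n (h u) = h (cyc_pred n u)" unfolding h_def using cyc_pred_half_turn[OF assms(1) u] .
    moreover have "even (of_bool (v \<in> A) + of_bool (cyc_pred n v \<in> A) + of_bool (v mod n \<in> B) :: nat)"
      if "v < 2*n" for v
      using assms(2) that unfolding even_parts_def by blast
    ultimately have "even (of_bool (u \<in> A) + of_bool (cyc_pred n u \<in> A) + of_bool (u mod n \<in> B) :: nat)"
      "even (of_bool (h u \<in> A) + of_bool (h (cyc_pred n u) \<in> A) + of_bool (u mod n \<in> B) :: nat)"
      using u by metis+
    then show ?thesis unfolding d_def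
      by (cases "u \<in> A"; cases "h u \<in> A"; cases "cyc_pred n u \<in> A"; cases "h (cyc_pred n u) \<in> A";
          cases "u mod n \<in> B"; simp)
  qed
  then have const: "d u = d 0" if "u < 2*n" for u using eq_cyc_pred_imp_const that by blast
  have h_low: "h v = v + n" if "v < n" for v using that by (simp add: h_def)
  have "d 0"
  proof (rule ccontr)
    assume "\<not> d 0"
    then have "v \<in> A \<longleftrightarrow> v + n \<notin> A" if "v < n" for v
      using const[of v] h_low[OF that] that unfolding d_def by auto
    then show False using card_half_turn_complement[OF assms(3)] assms(4) by simp
  qed
  then show ?thesis using const[of u] h_low[OF assms(5)] assms(5) unfolding d_def by simp
qed

lemma even_parts_chord_iff:
  assumes "even_parts n A B" "u < n"
  shows "u \<in> B \<longleftrightarrow> odd (of_bool (u \<in> A) + of_bool (cyc_pred n u \<in> A) :: nat)"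
  using assms unfolding even_parts_def by (cases "u \<in> B") (auto dest!: spec[of _ u])

section \<open>Maximal runs of a set of natural numbers\<close>

definition run_starts :: "nat set \<Rightarrow> nat set" where
  "run_starts I = {s\<in>I. s = 0 \<or> s - 1 \<notin> I}"

definition run_length :: "nat set \<Rightarrow> nat \<Rightarrow> nat" where
  "run_length I s = (LEAST L. s + L \<notin> I)"

definition runs :: "nat set \<Rightarrow> (nat \<times> nat) set" where
  "runs I = (\<lambda>s. (s, run_length I s)) ` run_starts I"

definition boundary :: "nat \<Rightarrow> nat set \<Rightarrow> nat set" where
  "boundary n I = {u. 0 < u \<and> u < n \<and> (u \<in> I \<longleftrightarrow> u - 1 \<notin> I)}"

lemma run_starts_subset: "run_starts I \<subseteq> I"
  unfolding run_starts_def by auto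

lemma card_runs: "card (runs I) = card (run_starts I)"
  unfolding runs_def by (rule card_image) (auto simp: inj_on_def)

lemma boundary_nonempty:
  assumes "I \<subseteq> {..<n}" "I \<noteq> {}" "card I < n"
  shows "boundary n I \<noteq> {}"
proof
  assume "boundary n I = {}"
  then have "u \<in> I \<longleftrightarrow> 0 \<in> I" if "u < n" for u
    using that by (induction u) (auto simp: boundary_def)
  then have "I = {} \<or> I = {..<n}" using assms(1) by auto
  then show False using assms(2,3) by auto
qed

context
  fixes I :: "nat set" and n :: nat
  assumes I_subset: "I \<subseteq> {..<n}"
begin

lemma run_end_notin: "s < n \<Longrightarrow> s + run_length I s \<notin> I"
  unfolding run_length_def by (rule LeastI[of _ "n - s"]) (use I_subset in auto)

lemma run_length_le: "s < n \<Longrightarrow> run_length I s \<le> n - s"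
  unfolding run_length_def by (rule Least_le) (use I_subset in auto)

lemma mem_of_less_run_length: "L < run_length I s \<Longrightarrow> s + L \<in> I"
  unfolding run_length_def using not_less_Least by blast

lemma run_length_pos: "s \<in> I \<Longrightarrow> 1 \<le> run_length I s"
  using run_end_notin[of s] I_subset by (cases "run_length I s") auto

lemma run_subset: "{s..<s + run_length I s} \<subseteq> I"
proof
  fix i assume "i \<in> {s..<s + run_length I s}"
  then have "s + (i - s) \<in> I" by (intro mem_of_less_run_length) auto
  then show "i \<in> I" using \<open>i \<in> {s..<s + run_length I s}\<close> by simp
qed

lemma run_length_le_card: "run_length I s \<le> card I"
  using card_mono[OF finite_subset[OF I_subset] run_subset] by simp

lemma mem_run: "i \<in> I \<Longrightarrow> \<exists>s\<in>run_starts I. s \<le> i \<and> i < s + run_length I s"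
proof (induction i)
  case 0
  then show ?case using run_length_pos[OF 0] by (auto simp: run_starts_def)
next
  case (Suc i)
  show ?case
  proof (cases "i \<in> I")
    case True
    then obtain s where s: "s \<in> run_starts I" "s \<le> i" "i < s + run_length I s" using Suc.IH by blast
    have "s < n" using s(1) run_starts_subset I_subset by auto
    then have "Suc i \<noteq> s + run_length I s" using run_end_notin Suc.prems by metis
    then show ?thesis using s by (intro bexI[OF _ s(1)]) auto
  next
    case False
    then have "Suc i \<in> run_starts I" unfolding run_starts_def using Suc.prems by simp
    then show ?thesis using run_length_pos[OF Suc.prems] by force
  qed
qed

lemma union_runs: "I = (\<Union>(s, L)\<in>runs I. {s..<s + L})"
  using mem_run run_subset unfolding runs_def by fastforce

lemma inj_on_run_end: "inj_on (\<lambda>s. s + run_length I s) (run_starts I)"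
proof -
  have key: False if "s \<in> run_starts I" "s' \<in> run_starts I" "s < s'"
    "s + run_length I s = s' + run_length I s'" for s s'
  proof -
    have "s' - 1 \<notin> I" using that(2,3) unfolding run_starts_def by auto
    moreover have "s + (s' - 1 - s) \<in> I" using that(3,4) by (intro mem_of_less_run_length) linarith
    ultimately show False using that(3) by simp
  qed
  show ?thesis
  proof (rule inj_onI)
    fix s s' assume "s \<in> run_starts I" "s' \<in> run_starts I" "s + run_length I s = s' + run_length I s'"
    then show "s = s'" using key[of s s'] key[of s' s] by (cases "s < s'"; cases "s' < s") auto
  qed
qed

lemma runs_subset: "runs I \<subseteq> {..<n} \<times> {1..card I}"
  using run_starts_subset I_subset run_length_pos run_length_le_card unfolding runs_def by fastforce

lemma run_end_mem_boundary:
  assumes "s \<in> run_starts I" "s + run_length I s < n"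
  shows "s + run_length I s \<in> boundary n I"
proof -
  have "s \<in> I" using assms(1) run_starts_subset by blast
  then have "1 \<le> run_length I s" by (rule run_length_pos)
  then have "s + run_length I s - 1 \<in> I" using mem_of_less_run_length[of "run_length I s - 1" s] by simp
  moreover have "s + run_length I s \<notin> I" using run_end_notin[of s] I_subset \<open>s \<in> I\<close> by auto
  ultimately show ?thesis using assms(2) \<open>1 \<le> run_length I s\<close> unfolding boundary_def by auto
qed

text \<open>Run ends are distinct, and at most one of them is not below \<open>n\<close>.\<close>

lemma card_run_starts_le_inner_ends:
  "card (run_starts I) \<le> card {e\<in>(\<lambda>s. s + run_length I s) ` run_starts I. e < n} + 1"
proof -
  define ends where "ends = {e\<in>(\<lambda>s. s + run_length I s) ` run_starts I. e < n}"
  have "finite ends" unfolding ends_def by auto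
  have "(\<lambda>s. s + run_length I s) ` run_starts I \<subseteq> insert n ends"
  proof
    fix e assume "e \<in> (\<lambda>s. s + run_length I s) ` run_starts I"
    then obtain s where s: "s \<in> run_starts I" "e = s + run_length I s" by blast
    then have "s < n" using run_starts_subset I_subset by auto
    then have "e \<le> n" using run_length_le[of s] s(2) by simp
    then show "e \<in> insert n ends" using s unfolding ends_def by auto
  qed
  then have "card ((\<lambda>s. s + run_length I s) ` run_starts I) \<le> card (insert n ends)"
    using \<open>finite ends\<close> by (simp add: card_mono)
  also have "\<dots> \<le> card ends + 1" using \<open>finite ends\<close> by (simp add: card_insert_if)
  finally show ?thesis using inj_on_run_end by (simp add: ends_def card_image)
qed

lemma card_run_starts_le_boundary: "2 * card (run_starts I) \<le> card (boundary n I) + 2"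
proof -
  define S where "S = run_starts I"
  define ends where "ends = {e\<in>(\<lambda>s. s + run_length I s) ` S. e < n}"
  have "finite S" unfolding S_def using finite_subset[OF run_starts_subset finite_subset[OF I_subset]] by simp
  have "S - {0} \<subseteq> boundary n I"
    using I_subset unfolding S_def run_starts_def boundary_def by auto
  moreover have "ends \<subseteq> boundary n I" using run_end_mem_boundary unfolding ends_def S_def by auto
  moreover have "(S - {0}) \<inter> ends = {}"
    using run_end_notin I_subset run_starts_subset unfolding S_def ends_def by fastforce
  moreover have "finite ends" "finite (boundary n I)" unfolding ends_def boundary_def by auto
  ultimately have "card (S - {0}) + card ends \<le> card (boundary n I)"
    using \<open>finite S\<close> by (simp flip: card_Un_disjoint add: card_mono)
  moreover have "card S \<le> card (S - {0}) + 1"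
    using card_Suc_Diff1[OF \<open>finite S\<close>, of 0] by (cases "0 \<in> S") auto
  moreover have "card S \<le> card ends + 1" unfolding S_def ends_def by (rule card_run_starts_le_inner_ends)
  ultimately show ?thesis unfolding S_def by linarith
qed

end

section \<open>Counting even pairs\<close>

lemma card_subsets_card_le:
  assumes "finite U"
  shows "card {G. G \<subseteq> U \<and> card G \<le> R} = (\<Sum>a\<le>R. card U choose a)"
proof -
  have "{G. G \<subseteq> U \<and> card G \<le> R} = (\<Union>a\<le>R. {G. G \<subseteq> U \<and> card G = a})" by auto
  moreover have "finite {G. G \<subseteq> U \<and> card G = a}" for a
    by (rule finite_subset[of _ "Pow U"]) (use assms in auto)
  ultimately have "card {G. G \<subseteq> U \<and> card G \<le> R} = (\<Sum>a\<le>R. card {G. G \<subseteq> U \<and> card G = a})"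
    by (simp only:) (rule card_UN_disjoint, auto)
  also have "\<dots> = (\<Sum>a\<le>R. card U choose a)" using n_subsets[OF assms] by simp
  finally show ?thesis .
qed

lemma card_even_pairs_eq_0:
  assumes "n \<ge> 1" "2 * n < k"
  shows "card (even_pairs n k) = 0"
proof -
  have "even_pairs n k = {}"
    using even_parts_card_le(2)[OF assms(1)] assms(2) unfolding even_pairs_def by fastforce
  then show ?thesis by simp
qed

text \<open>The chord set determines the cycle set up to complementation, and is at most half of the pair.\<close>

lemma card_even_pairs_le_sum_choose:
  assumes "n \<ge> 1"
  shows "card (even_pairs n k) \<le> 2 * (\<Sum>r\<le>k div 2. n choose r)"
proof -
  define W where "W = {B. B \<subseteq> {..<n} \<and> card B \<le> k div 2}"
  have "inj_on (\<lambda>(A, B). (B, 0 \<in> A)) (even_pairs n k)"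
  proof (rule inj_onI)
    fix x y assume "x \<in> even_pairs n k" "y \<in> even_pairs n k"
      and "(\<lambda>(A, B). (B, 0 \<in> A)) x = (\<lambda>(A, B). (B, 0 \<in> A)) y"
    moreover obtain A B A' B' where "x = (A, B)" "y = (A', B')" by fastforce
    ultimately have AB: "(A, B) \<in> even_pairs n k" "(A', B) \<in> even_pairs n k" "0 \<in> A \<longleftrightarrow> 0 \<in> A'" "B' = B"
      by auto
    then have "A' = A \<or> A' = {..<2*n} - A"
      using even_parts_cycle_part_unique[OF assms] unfolding even_pairs_def by blast
    then show "x = y" using AB(3,4) assms \<open>x = (A, B)\<close> \<open>y = (A', B')\<close> by auto
  qed
  moreover have "(\<lambda>(A, B). (B, 0 \<in> A)) ` even_pairs n k \<subseteq> W \<times> UNIV"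
    using even_parts_card_le(1)[OF assms] unfolding even_pairs_def W_def by fastforce
  moreover have "finite W" unfolding W_def by (rule finite_subset[of _ "Pow {..<n}"]) auto
  ultimately have "card (even_pairs n k) \<le> card (W \<times> (UNIV :: bool set))"
    by (intro card_inj_on_le) auto
  also have "\<dots> = 2 * card W" by (simp add: card_cartesian_product)
  also have "card W = (\<Sum>r\<le>k div 2. n choose r)"
    unfolding W_def using card_subsets_card_le[of "{..<n}" "k div 2"] by simp
  finally show ?thesis .
qed

lemma even_pairs_small_cycle_part:
  assumes "n \<ge> 1" "(A, B) \<in> even_pairs n k" "k < n"
  shows "A = (A \<inter> {..<n}) \<union> (\<lambda>u. u + n) ` (A \<inter> {..<n})"
proof -
  have A: "even_parts n A B" "A \<subseteq> {..<2*n}" "card A < n" using assms unfolding even_pairs_def by auto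
  show ?thesis
  proof (intro equalityI subsetI)
    fix x assume "x \<in> A"
    show "x \<in> (A \<inter> {..<n}) \<union> (\<lambda>u. u + n) ` (A \<inter> {..<n})"
    proof (cases "x < n")
      case False
      then have "x - n < n" "x - n + n = x" using A(2) \<open>x \<in> A\<close> by auto
      then have "x - n \<in> A \<inter> {..<n}"
        using even_parts_half_turn_invariant[OF assms(1) A, of "x - n"] \<open>x \<in> A\<close> by simp
      then show ?thesis using \<open>x - n + n = x\<close> by (metis UnI2 image_eqI)
    qed (use \<open>x \<in> A\<close> in simp)
  qed (use even_parts_half_turn_invariant[OF assms(1) A] in auto)
qed

lemma boundary_subset_chord_part:
  assumes "(A, B) \<in> even_pairs n k"
  shows "boundary n (A \<inter> {..<n}) \<subseteq> B"
proof
  fix u assume "u \<in> boundary n (A \<inter> {..<n})"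
  then have "0 < u" "u < n" "u \<in> A \<longleftrightarrow> u - 1 \<notin> A" unfolding boundary_def by auto
  moreover have "even_parts n A B" using assms unfolding even_pairs_def by simp
  ultimately show "u \<in> B" using even_parts_chord_iff[of n A B u] by (simp add: cyc_pred_def)
qed

text \<open>For \<open>k < n\<close> the pair is encoded by the maximal runs of \<open>A \<inter> {..<n}\<close>, each of which starts and
  ends at a chord.\<close>

lemma even_pairs_small_runs:
  assumes "n \<ge> 1" "(A, B) \<in> even_pairs n k" "k < n"
  shows "3 \<le> k" "runs (A \<inter> {..<n}) \<subseteq> {..<n} \<times> {1..k}" "4 * card (runs (A \<inter> {..<n})) \<le> k + 2"
proof -
  define I where "I = A \<inter> {..<n}"
  have A: "A \<subseteq> {..<2*n}" "B \<subseteq> {..<n}" "even_parts n A B" "card A + card B = k" "A \<noteq> {} \<or> B \<noteq> {}"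
    using assms(2) unfolding even_pairs_def by auto
  have I: "I \<subseteq> {..<n}" "finite I" unfolding I_def by auto
  have "card A = card (I \<union> (\<lambda>u. u + n) ` I)"
    using even_pairs_small_cycle_part[OF assms(1-3)] unfolding I_def by (rule arg_cong)
  also have "\<dots> = card I + card ((\<lambda>u. u + n) ` I)"
    using I by (intro card_Un_disjoint) auto
  finally have "card A = 2 * card I" by (simp add: card_image)
  have "I \<noteq> {}"
  proof
    assume "I = {}"
    then have "A = {}" using even_pairs_small_cycle_part[OF assms(1-3)] unfolding I_def by simp
    then have "B = {}" using even_parts_chord_iff[OF A(3)] A(2) by auto
    then show False using A(5) \<open>A = {}\<close> by simp
  qed
  then have "1 \<le> card I" using I(2) by (simp add: Suc_le_eq card_gt_0_iff)
  have "boundary n I \<subseteq> B" unfolding I_def by (rule boundary_subset_chord_part[OF assms(2)])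
  moreover have "boundary n I \<noteq> {}"
    using boundary_nonempty[OF I(1) \<open>I \<noteq> {}\<close>] \<open>card A = 2 * card I\<close> A(4) assms(3) by simp
  ultimately have "card (boundary n I) \<le> card B" "1 \<le> card B"
    using A(2) finite_subset[OF A(2)] by (auto simp: card_mono Suc_le_eq card_gt_0_iff)
  then show "3 \<le> k" using \<open>1 \<le> card I\<close> \<open>card A = 2 * card I\<close> A(4) by linarith
  show "runs (A \<inter> {..<n}) \<subseteq> {..<n} \<times> {1..k}"
    using runs_subset[OF I(1)] \<open>card A = 2 * card I\<close> A(4) unfolding I_def by fastforce
  show "4 * card (runs (A \<inter> {..<n})) \<le> k + 2"
    using card_run_starts_le_boundary[OF I(1)] card_runs[of I] \<open>card (boundary n I) \<le> card B\<close>
      card_mono[OF I(2) run_starts_subset] \<open>card A = 2 * card I\<close> A(4)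
    unfolding I_def by linarith
qed

lemma card_even_pairs_small:
  assumes "n \<ge> 1" "k < n"
  shows "card (even_pairs n k) \<le> (\<Sum>a\<le>(k+2) div 4. (n*k) choose a)"
proof -
  define U where "U = {..<n} \<times> {1..k}"
  define enc where "enc = (\<lambda>(A::nat set, B::nat set). runs (A \<inter> {..<n}))"
  have "inj_on enc (even_pairs n k)"
  proof (rule inj_onI, clarify)
    fix A B A' B' assume AB: "(A, B) \<in> even_pairs n k" "(A', B') \<in> even_pairs n k"
      and "enc (A, B) = enc (A', B')"
    then have "A \<inter> {..<n} = A' \<inter> {..<n}"
      using union_runs[of "A \<inter> {..<n}" n] union_runs[of "A' \<inter> {..<n}" n] unfolding enc_def by auto
    then have "A = A'"
      using even_pairs_small_cycle_part[OF assms(1) AB(1) assms(2)]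
        even_pairs_small_cycle_part[OF assms(1) AB(2) assms(2)] by simp
    moreover have "even_parts n A B" "even_parts n A' B'" "B \<subseteq> {..<n}" "B' \<subseteq> {..<n}"
      using AB unfolding even_pairs_def by auto
    ultimately show "A = A' \<and> B = B'" using even_parts_chord_iff by blast
  qed
  moreover have "enc ` even_pairs n k \<subseteq> {G. G \<subseteq> U \<and> card G \<le> (k+2) div 4}"
    using even_pairs_small_runs[OF assms(1) _ assms(2)] unfolding enc_def U_def by fastforce
  moreover have "finite {G. G \<subseteq> U \<and> card G \<le> (k+2) div 4}"
    unfolding U_def by (rule finite_subset[of _ "Pow ({..<n} \<times> {1..k})"]) auto
  ultimately have "card (even_pairs n k) \<le> card {G. G \<subseteq> U \<and> card G \<le> (k+2) div 4}"
    by (intro card_inj_on_le) auto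
  also have "\<dots> = (\<Sum>a\<le>(k+2) div 4. (n*k) choose a)"
    using card_subsets_card_le[of U] unfolding U_def by simp
  finally show ?thesis .
qed

lemma card_even_pairs_tiny:
  assumes "n \<ge> 1" "k < n" "k \<le> 2"
  shows "card (even_pairs n k) = 0"
  using even_pairs_small_runs(1)[OF assms(1) _ assms(2)] assms(3) by (fastforce simp: card_eq_0_iff)

section \<open>Estimates for binomial coefficients\<close>

lemma binomial_Suc_mult_eq_nat: "Suc k * (N choose Suc k) = (N - k) * (N choose k)"
proof (cases N)
  case (Suc M)
  have "Suc k * (Suc M choose Suc k) = Suc M * (M choose k)" by (rule Suc_times_binomial)
  moreover have "(Suc M - k) * (Suc M choose k) = Suc M * (M choose k)"
    using binomial_absorb_comp[of "Suc M" k] by (simp only: diff_Suc_1)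
  ultimately show ?thesis using Suc by simp
qed simp

lemma binomial_Suc_mult_eq:
  assumes "k \<le> N"
  shows "real (N choose Suc k) * Suc k = real (N choose k) * (real N - real k)"
proof -
  have "real (Suc k * (N choose Suc k)) = real ((N - k) * (N choose k))"
    unfolding binomial_Suc_mult_eq_nat ..
  then show ?thesis using assms by (simp add: of_nat_diff algebra_simps)
qed

lemma binomial_le_ratio_pow_mult:
  assumes "a \<le> b"
  shows "real (a choose j) \<le> (real a / real b)^j * real (b choose j)"
proof (induction j)
  case (Suc j)
  show ?case
  proof (cases "j < a")
    case False
    then show ?thesis by (simp add: binomial_eq_0)
  next
    case True
    then have "0 < b" "j \<le> b" using assms by auto
    have "real (a choose Suc j) * Suc j = real (a choose j) * (real a - real j)"
      using True by (intro binomial_Suc_mult_eq) simp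
    also have "\<dots> \<le> (real a / real b)^j * real (b choose j) * (real a - real j)"
      using True by (intro mult_right_mono Suc.IH) simp
    also have "\<dots> \<le> (real a / real b)^j * real (b choose j) * (real a / real b * (real b - real j))"
      using assms \<open>0 < b\<close> by (intro mult_left_mono) (auto simp: field_simps intro: mult_right_mono)
    also have "\<dots> = (real a / real b)^Suc j * (real (b choose j) * (real b - real j))"
      by (simp only: power_Suc mult_ac)
    also have "\<dots> = (real a / real b)^Suc j * real (b choose Suc j) * Suc j"
      unfolding binomial_Suc_mult_eq[OF \<open>j \<le> b\<close>, symmetric] by (simp only: mult.assoc)
    finally show ?thesis by (rule mult_right_le_imp_le) simp
  qed
qed simp

lemma binomial_2n_le: "n \<ge> 1 \<Longrightarrow> real ((2*n) choose j) \<le> (2/3)^j * real ((3*n) choose j)"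
  using binomial_le_ratio_pow_mult[of "2*n" "3*n" j] by simp

lemma binomial_doubling:
  assumes "3 * k \<le> N" "j \<le> k"
  shows "2^(k - j) * real (N choose j) \<le> real (N choose k)"
  using assms
proof (induction k)
  case (Suc k)
  show ?case
  proof (cases "j = Suc k")
    case False
    then have "j \<le> k" "3 * k \<le> N" using Suc.prems by auto
    have "2^(Suc k - j) * real (N choose j) * Suc k \<le> 2 * real (N choose k) * Suc k"
      using Suc.IH[OF \<open>3 * k \<le> N\<close> \<open>j \<le> k\<close>] \<open>j \<le> k\<close> by (simp add: Suc_diff_le)
    also have "\<dots> = real (N choose k) * (2 * Suc k)" by simp
    also have "\<dots> \<le> real (N choose k) * (real N - real k)"
      by (rule mult_left_mono) (use Suc.prems(1) in auto)
    also have "\<dots> = real (N choose Suc k) * Suc k"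
      using binomial_Suc_mult_eq[of k N] Suc.prems(1) by simp
    finally show ?thesis by (rule mult_right_le_imp_le) simp
  qed simp
qed simp

lemma sq_sum_binomial_le: "(\<Sum>r\<le>R. n choose r)^2 \<le> (\<Sum>k\<le>2*R. (2*n) choose k)"
proof -
  define a where "a r = n choose r" for r
  have "(\<Sum>r\<le>R. a r)^2 = (\<Sum>(i,j)\<in>{..R} \<times> {..R}. a i * a j)"
    by (simp add: power2_eq_square sum_product sum.cartesian_product)
  also have "\<dots> \<le> (\<Sum>(i,j)\<in>{(i,j). i + j \<le> 2*R}. a i * a j)"
  proof (rule sum_mono2)
    have "{(i,j). i + j \<le> 2*R} \<subseteq> {..2*R} \<times> {..2*R}" by auto
    then show "finite {(i,j). i + j \<le> 2*R}" by (rule finite_subset) simp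
  qed auto
  also have "\<dots> = (\<Sum>k\<le>2*R. \<Sum>i\<le>k. a i * a (k - i))" by (rule sum.triangle_reindex_eq)
  also have "\<dots> = (\<Sum>k\<le>2*R. (2*n) choose k)"
    by (rule sum.cong[OF refl]) (simp add: a_def vandermonde mult_2)
  finally show ?thesis unfolding a_def .
qed

lemma binomial_3n_Suc_eq:
  "real ((3*n+3) choose (n+1)) * ((2*n+1) * (2*n+2) * (n+1))
     = real ((3*n) choose n) * ((3*n+1) * (3*n+2) * (3*n+3))"
proof -
  have absorb: "real (N - n) * real (N choose n) = real N * real ((N - 1) choose n)" for N
    using binomial_absorb_comp[of N n] by (metis of_nat_mult)
  have "3*n+1-n = 2*n+1" "3*n+1-1 = 3*n" "3*n+2-n = 2*n+2" "3*n+2-1 = 3*n+1"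
    "3*n+3-n = 2*n+3" "3*n+3-1 = 3*n+2" by simp_all
  note h = this
  have e1: "real (2*n+1) * real ((3*n+1) choose n) = real (3*n+1) * real ((3*n) choose n)"
    using absorb[of "3*n+1", unfolded h] .
  have e2: "real (2*n+2) * real ((3*n+2) choose n) = real (3*n+2) * real ((3*n+1) choose n)"
    using absorb[of "3*n+2", unfolded h] .
  have e3: "real (2*n+3) * real ((3*n+3) choose n) = real (3*n+3) * real ((3*n+2) choose n)"
    using absorb[of "3*n+3", unfolded h] .
  have e4: "real ((3*n+3) choose Suc n) * Suc n = real ((3*n+3) choose n) * (real (3*n+3) - real n)"
    by (rule binomial_Suc_mult_eq) simp
  have "real ((3*n+3) choose (n+1)) * ((2*n+1) * (2*n+2) * (n+1))
      = (real (2*n+1) * real (2*n+2)) * (real ((3*n+3) choose Suc n) * Suc n)"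
    by (simp add: algebra_simps)
  also have "\<dots> = real (2*n+1) * (real (2*n+2) * (real (2*n+3) * real ((3*n+3) choose n)))"
    unfolding e4 by (simp add: algebra_simps)
  also have "\<dots> = real (3*n+3) * (real (2*n+1) * (real (2*n+2) * real ((3*n+2) choose n)))"
    unfolding e3 by (simp add: algebra_simps)
  also have "\<dots> = real (3*n+3) * real (3*n+2) * (real (2*n+1) * real ((3*n+1) choose n))"
    unfolding e2 by (simp add: algebra_simps)
  also have "\<dots> = real (3*n+3) * real (3*n+2) * (real (3*n+1) * real ((3*n) choose n))"
    unfolding e1 ..
  finally show ?thesis by (simp add: algebra_simps)
qed

lemma binomial_3n_n_ge: "n \<ge> 1 \<Longrightarrow> 3 * 5^(n-1) \<le> real ((3*n) choose n)"
proof (induction n rule: dec_induct)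
  case (step m)
  define P where "P = (2*real m+1) * (2*real m+2) * (real m+1)"
  define Q where "Q = (3*real m+1) * (3*real m+2) * (3*real m+3)"
  have eq: "real ((3*m+3) choose (m+1)) * P = real ((3*m) choose m) * Q"
    using binomial_3n_Suc_eq[of m] unfolding P_def Q_def by (simp add: algebra_simps)
  have "0 \<le> (real m - 1) * (7 * real m + 4) * (real m + 1)"
    using step(1) by (intro mult_nonneg_nonneg) auto
  then have "5 * P \<le> Q" unfolding P_def Q_def by (simp add: algebra_simps)
  then have "5 * real ((3*m) choose m) * P \<le> real ((3*m+3) choose (m+1)) * P"
    unfolding eq by (simp add: mult_left_mono mult.assoc)
  then have "5 * real ((3*m) choose m) \<le> real ((3*m+3) choose (m+1))"
    by (simp add: P_def)
  then show ?case using step(3) step(1) by (cases m) auto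
qed simp

lemma binomial_ge_choose_n:
  assumes "n \<le> k" "k + n \<le> N"
  shows "N choose n \<le> N choose k"
proof (cases "2 * k \<le> N")
  case True
  then show ?thesis using assms(1) by (intro binomial_mono) auto
next
  case False
  then have "N choose (N - n) \<le> N choose k" using assms by (intro binomial_antimono) auto
  then show ?thesis using binomial_symmetric[of n N] assms by simp
qed

lemma sum_binomial_le_pow:
  assumes "M \<ge> 1"
  shows "real (\<Sum>a\<le>A. M choose a) \<le> (A + 1) * real M ^ A"
proof -
  have "real (M choose a) \<le> real M ^ A" if "a \<le> A" for a
  proof (cases "a \<le> M")
    case True
    then have "real (M choose a) \<le> real M ^ a" by (metis binomial_le_pow of_nat_le_iff of_nat_power)
    also have "\<dots> \<le> real M ^ A" using assms that by (intro power_increasing) auto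
    finally show ?thesis .
  qed (simp add: binomial_eq_0)
  then have "(\<Sum>a\<le>A. real (M choose a)) \<le> (\<Sum>a\<le>A. real M ^ A)" by (intro sum_mono) auto
  then show ?thesis by (simp add: ac_simps)
qed

lemma sum_binomial_le_two_pow: "(\<Sum>r\<le>R. n choose r) \<le> 2^n"
proof -
  have "(\<Sum>r\<le>R. n choose r) = card {G. G \<subseteq> {..<n} \<and> card G \<le> R}"
    using card_subsets_card_le[of "{..<n}" R] by simp
  also have "\<dots> \<le> card (Pow {..<n})" by (rule card_mono) auto
  finally show ?thesis by (simp add: card_Pow)
qed

section \<open>Bounding the terms \<open>c\<^sub>k\<^sup>2 / C(3n, k)\<close>\<close>

lemma sum_two_thirds_half_le: "(\<Sum>j\<le>k. (2/3::real)^j * (1/2)^(k - j)) \<le> 4 * (2/3)^k"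
proof (induction k)
  case (Suc k)
  have "(\<Sum>j\<le>Suc k. (2/3::real)^j * (1/2)^(Suc k - j))
          = (1/2) * (\<Sum>j\<le>k. (2/3::real)^j * (1/2)^(k - j)) + (2/3)^Suc k"
    by (simp add: sum_distrib_left Suc_diff_le mult_ac)
  also have "\<dots> \<le> 4 * (2/3)^Suc k" using Suc.IH by simp
  finally show ?case .
qed simp

lemma square_ratio_le_middle:
  assumes "n \<ge> 1" "k \<le> n" "c \<le> 2 * (\<Sum>r\<le>k div 2. n choose r)"
  shows "real c ^ 2 / real ((3*n) choose k) \<le> 16 * (2/3)^k"
proof -
  have "c ^ 2 \<le> 4 * (\<Sum>r\<le>k div 2. n choose r)^2"
    using power_mono[OF assms(3), of 2] by (simp add: power_mult_distrib)
  also have "\<dots> \<le> 4 * (\<Sum>j\<le>k. (2*n) choose j)"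
    using sq_sum_binomial_le[of n "k div 2"] sum_mono2[of "{..k}" "{..2 * (k div 2)}" "\<lambda>j. (2*n) choose j"]
    by simp
  finally have "real c ^ 2 \<le> 4 * (\<Sum>j\<le>k. real ((2*n) choose j))"
    by (metis of_nat_le_iff of_nat_mult of_nat_numeral of_nat_power of_nat_sum)
  also have "\<dots> \<le> 4 * (\<Sum>j\<le>k. (2/3)^j * ((1/2)^(k - j) * real ((3*n) choose k)))"
  proof (intro mult_left_mono sum_mono)
    fix j assume "j \<in> {..k}"
    then have "real ((3*n) choose j) \<le> (1/2)^(k - j) * real ((3*n) choose k)"
      using binomial_doubling[of k "3*n" j] assms(2) by (simp add: field_simps power_divide)
    then show "real ((2*n) choose j) \<le> (2/3)^j * ((1/2)^(k - j) * real ((3*n) choose k))"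
      using binomial_2n_le[OF assms(1), of j] by (meson mult_left_mono order_trans zero_le_power zero_le_divide_iff zero_le_numeral)
  qed simp
  also have "\<dots> = 4 * real ((3*n) choose k) * (\<Sum>j\<le>k. (2/3::real)^j * (1/2)^(k - j))"
    by (simp add: sum_distrib_left sum_distrib_right mult_ac)
  also have "\<dots> \<le> 16 * (2/3)^k * real ((3*n) choose k)"
    using mult_left_mono[OF sum_two_thirds_half_le[of k], of "4 * real ((3*n) choose k)"] by simp
  finally show ?thesis using assms(2) by (simp add: divide_le_eq mult_ac)
qed

lemma square_ratio_le_small:
  fixes K :: nat
  assumes "n \<ge> 1" "5 \<le> k" "k \<le> K" "k \<le> 3*n" "c \<le> (\<Sum>a\<le>(k+2) div 4. (n*k) choose a)"
  shows "real c ^ 2 / real ((3*n) choose k) \<le> (real K + 1)^2 * real n * ((real K + 1)^2 / sqrt (real n))^k"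
proof -
  define A where "A = (k + 2) div 4"
  define s where "s = sqrt (real n)"
  have "s \<ge> 1" "s^2 = real n" unfolding s_def using assms(1) by auto
  have "real c \<le> real (\<Sum>a\<le>A. (n*k) choose a)"
    using assms(5) unfolding A_def by (simp only: of_nat_le_iff)
  also have "\<dots> \<le> (real A + 1) * real (n*k) ^ A" using assms(1,2) by (intro sum_binomial_le_pow) simp
  finally have "real c ^ 2 \<le> ((real A + 1) * real (n*k) ^ A)^2" by (intro power_mono) auto
  moreover have "(real n / real k)^k \<le> real ((3*n) choose k)"
  proof -
    have "(real n / real k)^k \<le> (real (3*n) / real k)^k"
      using assms by (intro power_mono divide_right_mono) auto
    then show ?thesis using binomial_ge_n_over_k_pow_k[OF assms(4), where 'a=real] by simp
  qed
  ultimately have "real c ^ 2 / real ((3*n) choose k) \<le> ((real A + 1) * real (n*k) ^ A)^2 / (real n / real k)^k"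
    using assms(1,2) by (intro frac_le) auto
  also have "\<dots> = (real A + 1)^2 * (real n ^ (2*A) / real n ^ k) * real k ^ (2*A + k)"
    by (simp add: power_mult_distrib power_mult[symmetric] power_add power_divide mult_ac)
  also have "\<dots> \<le> (real K + 1)^2 * (real n / s ^ k) * ((real K + 1)^2)^k"
  proof (intro mult_mono)
    show "(real A + 1)^2 \<le> (real K + 1)^2" using assms(2,3) unfolding A_def by (intro power_mono) auto
    have "real n ^ (2*A) = s ^ (4*A)" by (simp add: \<open>s^2 = real n\<close>[symmetric] power_mult[symmetric] mult_ac)
    also have "\<dots> \<le> s ^ (k + 2)" using \<open>s \<ge> 1\<close> unfolding A_def by (intro power_increasing) auto
    finally have "real n ^ (2*A) / real n ^ k \<le> s ^ (k + 2) / (s^k * s^k)"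
      using \<open>s \<ge> 1\<close> by (simp add: divide_right_mono \<open>s^2 = real n\<close>[symmetric] power_mult[symmetric]
          power_add[symmetric] mult_2[symmetric] mult_ac)
    also have "\<dots> = real n / s ^ k"
      using \<open>s \<ge> 1\<close> by (simp add: power_add \<open>s^2 = real n\<close>[symmetric] field_simps power2_eq_square)
    finally show "real n ^ (2*A) / real n ^ k \<le> real n / s ^ k" .
    have "real k ^ (2*A + k) \<le> real k ^ (2*k)" using assms(2) unfolding A_def by (intro power_increasing) auto
    also have "\<dots> \<le> ((real K + 1)^2)^k" using assms(3) by (simp add: power_mult power_mono)
    finally show "real k ^ (2*A + k) \<le> ((real K + 1)^2)^k" .
  qed (use \<open>s \<ge> 1\<close> in auto)
  also have "\<dots> = (real K + 1)^2 * real n * ((real K + 1)^2 / s)^k" by (simp add: power_divide)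
  finally show ?thesis unfolding s_def .
qed

lemma square_ratio_le_3_4:
  assumes "n \<ge> 1" "k = 3 \<or> k = 4" "k \<le> 3*n" "c \<le> (\<Sum>a\<le>(k+2) div 4. (n*k) choose a)"
  shows "real c ^ 2 / real ((3*n) choose k) \<le> (1 + real n * real k)^2 * (real k / (3 * real n))^k"
proof -
  have "(k + 2) div 4 = 1" using assms(2) by auto
  then have "real c \<le> 1 + real n * real k" using assms(4) by (simp flip: of_nat_mult of_nat_le_iff)
  then have "real c ^ 2 \<le> (1 + real n * real k)^2" by (intro power_mono) auto
  moreover have "(real (3*n) / real k)^k \<le> real ((3*n) choose k)"
    using binomial_ge_n_over_k_pow_k[OF assms(3)] by simp
  ultimately have "real c ^ 2 / real ((3*n) choose k) \<le> (1 + real n * real k)^2 / (real (3*n) / real k)^k"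
    using assms(1,2) by (intro frac_le) auto
  also have "\<dots> = (1 + real n * real k)^2 * (real k / (3 * real n))^k" by (simp add: power_divide field_simps)
  finally show ?thesis .
qed

lemma square_ratio_le_large:
  assumes "n \<ge> 1" "n \<le> k" "k \<le> 2*n" "real c \<le> 2 * 2^n"
  shows "real c ^ 2 / real ((3*n) choose k) \<le> 4 * 4^n / (3 * 5^(n-1))"
proof -
  have "real ((3*n) choose n) \<le> real ((3*n) choose k)"
    using binomial_ge_choose_n[of n k "3*n"] assms(2,3) by simp
  then have "3 * 5^(n-1) \<le> real ((3*n) choose k)" using binomial_3n_n_ge[OF assms(1)] by linarith
  moreover have "real c ^ 2 \<le> (2 * 2^n)^2" using assms(4) by (intro power_mono) auto
  moreover have "(2 * 2^n)^2 = (4 * 4^n :: real)"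
  proof -
    have "(4::real)^n = 2^(2*n)" by (simp add: power_mult)
    then show ?thesis by (simp add: power_mult_distrib power_mult[symmetric] mult.commute)
  qed
  ultimately show ?thesis by (intro frac_le) auto
qed

lemma sum_geometric_tail_le:
  fixes x :: real
  assumes "0 \<le> x" "x < 1"
  shows "(\<Sum>k\<le>M. if m \<le> k then x^k else 0) \<le> x^m / (1 - x)"
proof -
  have "(\<Sum>k\<le>M. if m \<le> k then x^k else 0) = (\<Sum>k\<in>{m..M}. x^k)"
    by (subst sum.inter_filter[symmetric]) (auto intro: sum.cong)
  also have "\<dots> \<le> x^m / (1 - x)"
    using assms by (auto simp: sum_gp divide_right_mono)
  finally show ?thesis .
qed

text \<open>One summand per regime of \<open>k\<close>; the threshold \<open>K\<close> will be \<open>\<lceil>3 ln n\<rceil>\<close>.\<close>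

definition term_bound :: "nat \<Rightarrow> nat \<Rightarrow> nat \<Rightarrow> real" where
  "term_bound n K k =
     (if k = 3 \<or> k = 4 then (1 + real n * real k)^2 * (real k / (3 * real n))^k else 0)
   + (if 5 \<le> k \<and> k < K then (real K + 1)^2 * real n * ((real K + 1)^2 / sqrt (real n))^k else 0)
   + (if K \<le> k then 16 * (2/3)^k else 0)
   + (if n \<le> k \<and> k \<le> 2*n then 4 * 4^n / (3 * 5^(n-1)) else 0)"

lemma term_bound_ge:
  shows "k = 3 \<or> k = 4 \<Longrightarrow> (1 + real n * real k)^2 * (real k / (3 * real n))^k \<le> term_bound n K k"
    and "5 \<le> k \<Longrightarrow> k < K \<Longrightarrow>
           (real K + 1)^2 * real n * ((real K + 1)^2 / sqrt (real n))^k \<le> term_bound n K k"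
    and "K \<le> k \<Longrightarrow> 16 * (2/3)^k \<le> term_bound n K k"
    and "n \<le> k \<Longrightarrow> k \<le> 2*n \<Longrightarrow> 4 * 4^n / (3 * 5^(n-1)) \<le> term_bound n K k"
  unfolding term_bound_def by auto

lemma term_bound_nonneg: "0 \<le> term_bound n K k"
  unfolding term_bound_def by auto

lemma square_ratio_le_term_bound:
  assumes "n \<ge> 5" "k \<le> 3*n"
  shows "real (card (even_pairs n k))^2 / real ((3*n) choose k) \<le> term_bound n K k"
proof -
  define c where "c = card (even_pairs n k)"
  have n: "n \<ge> 1" using assms(1) by simp
  consider "2*n < k" | "n \<le> k" "k \<le> 2*n" | "k < n" "k \<le> 2" | "k < n" "k = 3 \<or> k = 4"
    | "k < n" "5 \<le> k" "k < K" | "k < n" "5 \<le> k" "K \<le> k" by linarith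
  then have "real c ^ 2 / real ((3*n) choose k) \<le> term_bound n K k"
  proof cases
    case 1
    then show ?thesis using card_even_pairs_eq_0[OF n] term_bound_nonneg by (simp add: c_def)
  next
    case 2
    have "c \<le> 2 * 2^n" using card_even_pairs_le_sum_choose[OF n, of k] sum_binomial_le_two_pow[of n "k div 2"]
      unfolding c_def by linarith
    then have "real c \<le> real (2 * 2^n)" by (simp only: of_nat_le_iff)
    then show ?thesis using 2 by (intro order_trans[OF square_ratio_le_large[OF n] term_bound_ge(4)]) auto
  next
    case 3
    then show ?thesis using card_even_pairs_tiny[OF n] term_bound_nonneg by (simp add: c_def)
  next
    case 4
    then show ?thesis
      using card_even_pairs_small[OF n, of k] assms(2) unfolding c_def
      by (intro order_trans[OF square_ratio_le_3_4[OF n] term_bound_ge(1)]) auto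
  next
    case 5
    then show ?thesis
      using card_even_pairs_small[OF n, of k] assms(2) unfolding c_def
      by (intro order_trans[OF square_ratio_le_small[OF n] term_bound_ge(2)]) auto
  next
    case 6
    then show ?thesis
      using card_even_pairs_le_sum_choose[OF n, of k] unfolding c_def
      by (intro order_trans[OF square_ratio_le_middle[OF n] term_bound_ge(3)]) auto
  qed
  then show ?thesis unfolding c_def .
qed

lemma sum_term_bound_le:
  fixes K :: nat
  assumes "n \<ge> 5" "(real K + 1)^2 / sqrt (real n) \<le> 1/2"
  shows "(\<Sum>k\<le>3*n. term_bound n K k)
           \<le> (1 + real n * 3)^2 * (3 / (3 * real n))^3 + (1 + real n * 4)^2 * (4 / (3 * real n))^4
             + 2 * ((real K + 1)^12 * real n / sqrt (real n)^5) + 48 * (2/3)^K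
             + (3 * real n + 1) * (4 * 4^n / (3 * 5^(n-1)))"
proof -
  have "{x. x \<le> 3*n \<and> (x = 3 \<or> x = 4)} = {3, 4}" using assms(1) by auto
  then have sa: "(\<Sum>k\<le>3*n. if k = 3 \<or> k = 4 then (1 + real n * real k)^2 * (real k / (3 * real n))^k else 0)
          = (1 + real n * 3)^2 * (3 / (3 * real n))^3 + (1 + real n * 4)^2 * (4 / (3 * real n))^4"
    by (subst sum.inter_filter[symmetric]) simp_all
  have sb: "(\<Sum>k\<le>3*n. if 5 \<le> k \<and> k < K then (real K + 1)^2 * real n * ((real K + 1)^2 / sqrt (real n))^k else 0)
              \<le> 2 * ((real K + 1)^12 * real n / sqrt (real n)^5)"
  proof -
    define \<rho> where "\<rho> = (real K + 1)^2 / sqrt (real n)"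
    have \<rho>: "0 \<le> \<rho>" "\<rho> \<le> 1/2" using assms(2) unfolding \<rho>_def by auto
    have "0 \<le> \<rho>^5 * (1 - 2 * \<rho>)" using \<rho> by (intro mult_nonneg_nonneg) auto
    then have "\<rho>^5 / (1 - \<rho>) \<le> 2 * \<rho>^5" using \<rho> by (simp add: pos_divide_le_eq algebra_simps)
    then have geo: "(\<Sum>k\<le>3*n. if 5 \<le> k then \<rho>^k else 0) \<le> 2 * \<rho>^5"
      using sum_geometric_tail_le[of \<rho> 5 "3*n"] \<rho> by linarith
    have "(\<Sum>k\<le>3*n. if 5 \<le> k \<and> k < K then (real K + 1)^2 * real n * \<rho>^k else 0)
            \<le> (real K + 1)^2 * real n * (\<Sum>k\<le>3*n. if 5 \<le> k then \<rho>^k else 0)"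
      unfolding sum_distrib_left by (intro sum_mono) (use \<rho> in auto)
    also have "\<dots> \<le> (real K + 1)^2 * real n * (2 * \<rho>^5)" by (intro mult_left_mono geo) auto
    also have "\<dots> = 2 * ((real K + 1)^12 * real n / sqrt (real n)^5)"
      unfolding \<rho>_def by (simp add: power_divide power_mult[symmetric])
    finally show ?thesis unfolding \<rho>_def .
  qed
  have "(\<Sum>k\<le>3*n. if K \<le> k then 16 * (2/3::real)^k else 0)
          = 16 * (\<Sum>k\<le>3*n. if K \<le> k then (2/3::real)^k else 0)"
    unfolding sum_distrib_left by (rule sum.cong) auto
  then have sc: "(\<Sum>k\<le>3*n. if K \<le> k then 16 * (2/3::real)^k else 0) \<le> 48 * (2/3)^K"
    using sum_geometric_tail_le[of "2/3::real" K "3*n"] by simp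
  have "(\<Sum>k\<le>3*n. if n \<le> k \<and> k \<le> 2*n then 4 * 4^n / (3 * 5^(n-1)) else (0::real))
          \<le> (\<Sum>k\<le>3*n. 4 * 4^n / (3 * 5^(n-1)))" by (intro sum_mono) auto
  then have sd: "(\<Sum>k\<le>3*n. if n \<le> k \<and> k \<le> 2*n then 4 * 4^n / (3 * 5^(n-1)) else (0::real))
                   \<le> (3 * real n + 1) * (4 * 4^n / (3 * 5^(n-1)))" by (simp add: ac_simps)
  show ?thesis using sa sb sc sd by (simp only: term_bound_def sum.distrib)
qed

lemma two_thirds_pow_le:
  assumes "n \<ge> 1" "3 * ln (real n) \<le> real K"
  shows "(2/3::real)^K \<le> 1 / real n"
proof -
  have "2/3 \<le> exp (-1/3::real)" using exp_ge_add_one_self[of "-1/3::real"] by simp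
  then have "ln (2/3::real) \<le> -1/3" using ln_le_cancel_iff[of "2/3" "exp (-1/3::real)"] by simp
  then have "real K * ln (2/3) \<le> ln (real n) * (-1)"
    using assms(2) mult_left_mono[of "ln (2/3::real)" "-1/3" "real K"] by simp
  then have "exp (real K * ln (2/3)) \<le> exp (- ln (real n))" by simp
  then show ?thesis using assms(1) by (simp add: exp_of_nat_mult exp_minus inverse_eq_divide)
qed

definition not_odd_bound :: "nat \<Rightarrow> real" where
  "not_odd_bound n =
     (1 + real n * 3)^2 * (3 / (3 * real n))^3 + (1 + real n * 4)^2 * (4 / (3 * real n))^4
     + 2 * ((3 * ln (real n) + 2)^12 * real n / sqrt (real n)^5) + 48 / real n
     + (3 * real n + 1) * (4 * 4^n / (3 * 5^(n-1)))"

lemma not_odd_prob_le_bound: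
  assumes "n \<ge> 5" "(3 * ln (real n) + 2)^2 / sqrt (real n) \<le> 1/2"
  shows "not_odd_prob n \<le> not_odd_bound n"
proof -
  define K where "K = nat \<lceil>3 * ln (real n)\<rceil>"
  have "0 \<le> ln (real n)" using assms(1) by simp
  then have K: "3 * ln (real n) \<le> real K" "real K + 1 \<le> 3 * ln (real n) + 2" unfolding K_def by linarith+
  then have "(real K + 1)^2 / sqrt (real n) \<le> 1/2"
    using assms(2) by (smt (verit) divide_right_mono power_mono real_sqrt_ge_zero of_nat_0_le_iff)
  have "not_odd_prob n \<le> (\<Sum>k\<le>3*n. real (card {Y\<in>even_edge_sets n. card Y = k})^2 / real ((3*n) choose k))"
    using not_odd_prob_le_sum_even_edge_sets assms(1) by simp
  also have "\<dots> \<le> (\<Sum>k\<le>3*n. real (card (even_pairs n k))^2 / real ((3*n) choose k))"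
    using card_even_edge_sets_le assms(1) by (intro sum_mono divide_right_mono power_mono) auto
  also have "\<dots> \<le> (\<Sum>k\<le>3*n. term_bound n K k)"
    using assms(1) by (intro sum_mono square_ratio_le_term_bound) auto
  also have "\<dots> \<le> not_odd_bound n"
  proof -
    have "(real K + 1)^12 \<le> (3 * ln (real n) + 2)^12" using K(2) by (intro power_mono) auto
    then have "(real K + 1)^12 * real n / sqrt (real n)^5 \<le> (3 * ln (real n) + 2)^12 * real n / sqrt (real n)^5"
      by (intro divide_right_mono mult_right_mono) auto
    moreover have "(2/3::real)^K \<le> 1 / real n" using two_thirds_pow_le K(1) assms(1) by simp
    ultimately show ?thesis
      using sum_term_bound_le[OF assms(1) \<open>(real K + 1)^2 / sqrt (real n) \<le> 1/2\<close>]
      unfolding not_odd_bound_def by linarith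
  qed
  finally show ?thesis .
qed

theorem mainTheorem6:
  shows "not_odd_prob \<in> O(\<lambda>n. (ln (real n))^2 / real n)"
proof -
  have "eventually (\<lambda>n::nat. 5 \<le> n \<and> (3 * ln (real n) + 2)^2 / sqrt (real n) \<le> 1/2) sequentially"
    by (intro eventually_conj eventually_ge_at_top) real_asymp
  then have "eventually (\<lambda>n. norm (not_odd_prob n) \<le> norm (not_odd_bound n)) sequentially"
  proof eventually_elim
    case (elim n)
    then show ?case using not_odd_prob_le_bound[of n] by (simp add: not_odd_prob_def)
  qed
  then have "not_odd_prob \<in> O(not_odd_bound)" by (rule landau_o.big_mono)
  moreover have "not_odd_bound \<in> O(\<lambda>n. (ln (real n))^2 / real n)"
    unfolding not_odd_bound_def by real_asymp
  ultimately show ?thesis by (rule landau_o.big_trans)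
qed

end
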